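(* Let $\mathcal{X}$ be a finite set, $\pi$ a probability mass function on $\mathcal{X}$ with full support, and $P$ an ergodic $\pi$-reversible transition matrix. Let a group $\mathcal{G}$ act on $\mathcal{X}$ and let $G$ and $M$ be the Gibbs and Metropolis–Hastings orbit kernels for this same action, and $\theta:=\|M-G\|_{\ell^2_0(\pi)\to\ell^2_0(\pi)}$. Then for every positive integer $k$, $0\le\rho(M^kPM^k)-\rho(GPG)\le\rho(P)(2\theta^k+\theta^{2k})$. In particular, if $\theta<1$, then $\lim_{k\to\infty}\big(\rho(M^kPM^k)-\rho(GPG)\big)=0$.
   Context: $\langle f,g\rangle_\pi=\sum_x f(x)g(x)\pi(x)$, $\ell^2_0(\pi)=\{f:\sum_xf(x)\pi(x)=0\}$, operator norms with respect to $\|\cdot\|_\pi$. With $\mathcal{O}(x)$ the orbit of $x$: $G(x,y)=\pi(y)/\pi(\mathcal{O}(x))$ for $y\in\mathcal{O}(x)$, else $0$; $M(x,y)=\frac{1}{|\mathcal{O}(x)|-1}\min\{1,\pi(y)/\pi(x)\}$ for $y\in\mathcal{O}(x)\setminus\{x\}$, $0$ off the orbit, $M(x,x)=1-\sum_{y\ne x}M(x,y)$. For a $\pi$-self-adjoint kernel $K$, $\rho(K)=\sup_{0\ne f\in\ell^2_0(\pi)}|\langle f,Kf\rangle_\pi|/\langle f,f\rangle_\pi$. *)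

theory Defs
  imports "HOL-Analysis.Analysis" "HOL-Algebra.Group_Action"
begin

definition kapply :: "('x::finite \<Rightarrow> 'x \<Rightarrow> real) \<Rightarrow> ('x \<Rightarrow> real) \<Rightarrow> 'x \<Rightarrow> real" where
  "kapply K f = (\<lambda>x. \<Sum>y\<in>UNIV. K x y * f y)"

definition kmult :: "('x::finite \<Rightarrow> 'x \<Rightarrow> real) \<Rightarrow> ('x \<Rightarrow> 'x \<Rightarrow> real) \<Rightarrow> 'x \<Rightarrow> 'x \<Rightarrow> real" where
  "kmult K L = (\<lambda>x z. \<Sum>y\<in>UNIV. K x y * L y z)"

definition kid :: "'x \<Rightarrow> 'x \<Rightarrow> real" where
  "kid = (\<lambda>x y. if x = y then 1 else 0)"

primrec kpow :: "('x::finite \<Rightarrow> 'x \<Rightarrow> real) \<Rightarrow> nat \<Rightarrow> 'x \<Rightarrow> 'x \<Rightarrow> real" where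
  "kpow K 0 = kid"
| "kpow K (Suc n) = kmult K (kpow K n)"

definition pmf_full_support :: "('x::finite \<Rightarrow> real) \<Rightarrow> bool" where
  "pmf_full_support \<pi> \<longleftrightarrow> (\<forall>x. \<pi> x > 0) \<and> (\<Sum>x\<in>UNIV. \<pi> x) = 1"

definition stochastic :: "('x::finite \<Rightarrow> 'x \<Rightarrow> real) \<Rightarrow> bool" where
  "stochastic P \<longleftrightarrow> (\<forall>x y. P x y \<ge> 0) \<and> (\<forall>x. (\<Sum>y\<in>UNIV. P x y) = 1)"

definition reversible :: "('x \<Rightarrow> real) \<Rightarrow> ('x \<Rightarrow> 'x \<Rightarrow> real) \<Rightarrow> bool" where
  "reversible \<pi> P \<longleftrightarrow> (\<forall>x y. \<pi> x * P x y = \<pi> y * P y x)"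

definition irreducible_kernel :: "('x::finite \<Rightarrow> 'x \<Rightarrow> real) \<Rightarrow> bool" where
  "irreducible_kernel P \<longleftrightarrow> (\<forall>x y. \<exists>n. kpow P n x y > 0)"

definition aperiodic_kernel :: "('x::finite \<Rightarrow> 'x \<Rightarrow> real) \<Rightarrow> bool" where
  "aperiodic_kernel P \<longleftrightarrow> (\<forall>x. Gcd {n. n > 0 \<and> kpow P n x x > 0} = (1::nat))"

definition ergodic :: "('x::finite \<Rightarrow> 'x \<Rightarrow> real) \<Rightarrow> bool" where
  "ergodic P \<longleftrightarrow> irreducible_kernel P \<and> aperiodic_kernel P"

definition inner_pi :: "('x::finite \<Rightarrow> real) \<Rightarrow> ('x \<Rightarrow> real) \<Rightarrow> ('x \<Rightarrow> real) \<Rightarrow> real" where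
  "inner_pi \<pi> f g = (\<Sum>x\<in>UNIV. f x * g x * \<pi> x)"

definition l2_0 :: "('x::finite \<Rightarrow> real) \<Rightarrow> ('x \<Rightarrow> real) set" where
  "l2_0 \<pi> = {f. (\<Sum>x\<in>UNIV. f x * \<pi> x) = 0}"

text \<open>Operator norm on l^2_0(pi) w.r.t. the pi-norm (0 if l^2_0 is trivial; all
quotients are nonnegative, so inserting 0 does not change the supremum otherwise).\<close>
definition opnorm_l2_0 :: "('x::finite \<Rightarrow> real) \<Rightarrow> ('x \<Rightarrow> 'x \<Rightarrow> real) \<Rightarrow> real" where
  "opnorm_l2_0 \<pi> K = Sup (insert 0 {sqrt (inner_pi \<pi> (kapply K f) (kapply K f)) / sqrt (inner_pi \<pi> f f)
       | f. f \<in> l2_0 \<pi> \<and> f \<noteq> (\<lambda>_. 0)})"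

definition rho :: "('x::finite \<Rightarrow> real) \<Rightarrow> ('x \<Rightarrow> 'x \<Rightarrow> real) \<Rightarrow> real" where
  "rho \<pi> K = Sup (insert 0 {\<bar>inner_pi \<pi> f (kapply K f)\<bar> / inner_pi \<pi> f f
       | f. f \<in> l2_0 \<pi> \<and> f \<noteq> (\<lambda>_. 0)})"

definition gibbs_orbit :: "_ \<Rightarrow> ('g \<Rightarrow> 'x::finite \<Rightarrow> 'x) \<Rightarrow> ('x \<Rightarrow> real) \<Rightarrow> 'x \<Rightarrow> 'x \<Rightarrow> real" where
  "gibbs_orbit \<Gamma> \<phi> \<pi> = (\<lambda>x y. if y \<in> orbit \<Gamma> \<phi> x
       then \<pi> y / (\<Sum>z\<in>orbit \<Gamma> \<phi> x. \<pi> z) else 0)"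

definition mh_offdiag :: "_ \<Rightarrow> ('g \<Rightarrow> 'x::finite \<Rightarrow> 'x) \<Rightarrow> ('x \<Rightarrow> real) \<Rightarrow> 'x \<Rightarrow> 'x \<Rightarrow> real" where
  "mh_offdiag \<Gamma> \<phi> \<pi> = (\<lambda>x y. if y \<in> orbit \<Gamma> \<phi> x \<and> y \<noteq> x
       then min 1 (\<pi> y / \<pi> x) / (real (card (orbit \<Gamma> \<phi> x)) - 1) else 0)"

definition mh_orbit :: "_ \<Rightarrow> ('g \<Rightarrow> 'x::finite \<Rightarrow> 'x) \<Rightarrow> ('x \<Rightarrow> real) \<Rightarrow> 'x \<Rightarrow> 'x \<Rightarrow> real" where
  "mh_orbit \<Gamma> \<phi> \<pi> = (\<lambda>x y. if y = x
       then 1 - (\<Sum>z\<in>UNIV - {x}. mh_offdiag \<Gamma> \<phi> \<pi> x z)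
       else mh_offdiag \<Gamma> \<phi> \<pi> x y)"

end

theory Submission
  imports Defs
begin

text \<open>The Gibbs orbit kernel G is the \<pi>-orthogonal projection onto functions that are constant
on orbits, and the Metropolis--Hastings orbit kernel M is \<pi>-self-adjoint and moves only within
orbits, so MG = GM = G and hence M^k - G = (M - G)^k (I - G). Thus M^k f = Gf + e with
\<parallel>e\<parallel> \<le> \<theta>^k \<parallel>f\<parallel>. The lower bound holds because GPG = G (M^k P M^k) G and G is a
self-adjoint contraction. For the upper bound, expand the quadratic form of P at Gf + e: the
cross term is at most \<rho>(P) \<parallel>Gf\<parallel> \<parallel>e\<parallel> by polarization.\<close>

lemma kapply_kmult: "kapply (kmult K L) f = kapply K (kapply L f)"
  unfolding kapply_def kmult_def
  by (auto simp: sum_distrib_left sum_distrib_right mult.assoc intro!: ext sum.swap[THEN trans] sum.cong)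

lemma kapply_kid: "kapply kid f = f"
  unfolding kapply_def kid_def by (simp add: of_bool_def[symmetric])

lemma kapply_kpow: "kapply (kpow K n) f = (kapply K ^^ n) f"
  by (induction n arbitrary: f) (simp_all add: kapply_kmult kapply_kid)

lemma kapply_add: "kapply K (\<lambda>x. f x + g x) = (\<lambda>x. kapply K f x + kapply K g x)"
  unfolding kapply_def by (simp add: distrib_left sum.distrib)

lemma kapply_diff: "kapply K (\<lambda>x. f x - g x) = (\<lambda>x. kapply K f x - kapply K g x)"
  unfolding kapply_def by (simp add: right_diff_distrib sum_subtractf)

lemma kapply_cmult: "kapply K (\<lambda>x. c * f x) = (\<lambda>x. c * kapply K f x)"
  unfolding kapply_def by (simp add: sum_distrib_left mult.left_commute)

lemma kapply_zero: "kapply K (\<lambda>_. 0) = (\<lambda>_. 0)"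
  unfolding kapply_def by simp

lemma kapply_kernel_diff: "kapply (\<lambda>x y. K x y - L x y) f = (\<lambda>x. kapply K f x - kapply L f x)"
  unfolding kapply_def by (simp add: left_diff_distrib sum_subtractf)

lemma kapply_const:
  assumes "\<And>x. (\<Sum>y\<in>UNIV. K x y) = 1"
  shows "kapply K (\<lambda>_. c) = (\<lambda>_. c)"
  unfolding kapply_def using assms by (simp add: sum_distrib_right[symmetric])

lemma kapply_eq_const_on_support:
  assumes "\<And>y. K x y \<noteq> 0 \<Longrightarrow> g y = c" "(\<Sum>y\<in>UNIV. K x y) = 1"
  shows "kapply K g x = c"
proof -
  have "kapply K g x = (\<Sum>y\<in>UNIV. K x y * c)"
    unfolding kapply_def using assms(1) by (intro sum.cong) (auto simp: mult_cancel_left)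
  also have "\<dots> = c" using assms(2) by (simp flip: sum_distrib_right)
  finally show ?thesis .
qed

lemma abs_kapply_le:
  assumes "\<And>y. \<bar>f y\<bar> \<le> s"
  shows "\<bar>kapply K f x\<bar> \<le> (\<Sum>y\<in>UNIV. \<bar>K x y\<bar>) * s"
proof -
  have "\<bar>kapply K f x\<bar> \<le> (\<Sum>y\<in>UNIV. \<bar>K x y\<bar> * \<bar>f y\<bar>)"
    unfolding kapply_def abs_mult[symmetric] by (rule sum_abs)
  also have "\<dots> \<le> (\<Sum>y\<in>UNIV. \<bar>K x y\<bar> * s)"
    by (intro sum_mono mult_left_mono assms) simp
  finally show ?thesis by (simp add: sum_distrib_right)
qed

lemma inner_pi_commute: "inner_pi p f g = inner_pi p g f"
  unfolding inner_pi_def by (simp add: mult.commute mult.left_commute)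

lemma inner_pi_add_left: "inner_pi p (\<lambda>x. f x + g x) h = inner_pi p f h + inner_pi p g h"
  unfolding inner_pi_def by (simp add: algebra_simps sum.distrib)

lemma inner_pi_add_right: "inner_pi p h (\<lambda>x. f x + g x) = inner_pi p h f + inner_pi p h g"
  unfolding inner_pi_def by (simp add: algebra_simps sum.distrib)

lemma inner_pi_diff_left: "inner_pi p (\<lambda>x. f x - g x) h = inner_pi p f h - inner_pi p g h"
  unfolding inner_pi_def by (simp add: algebra_simps sum_subtractf)

lemma inner_pi_diff_right: "inner_pi p h (\<lambda>x. f x - g x) = inner_pi p h f - inner_pi p h g"
  unfolding inner_pi_def by (simp add: algebra_simps sum_subtractf)

lemma inner_pi_cmult_left: "inner_pi p (\<lambda>x. c * f x) h = c * inner_pi p f h"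
  unfolding inner_pi_def by (simp add: algebra_simps sum_distrib_left)

lemma inner_pi_cmult_right: "inner_pi p h (\<lambda>x. c * f x) = c * inner_pi p h f"
  unfolding inner_pi_def by (simp add: algebra_simps sum_distrib_left)

lemma inner_pi_zero_left: "inner_pi p (\<lambda>_. 0) f = 0"
  and inner_pi_zero_right: "inner_pi p f (\<lambda>_. 0) = 0"
  unfolding inner_pi_def by simp_all

lemma inner_pi_kapply_reversible:
  assumes "reversible p K"
  shows "inner_pi p f (kapply K g) = inner_pi p (kapply K f) g"
proof -
  have "inner_pi p f (kapply K g) = (\<Sum>x\<in>UNIV. \<Sum>y\<in>UNIV. f x * g y * (p x * K x y))"
    unfolding inner_pi_def kapply_def
    by (simp add: sum_distrib_left sum_distrib_right algebra_simps)
  also have "\<dots> = (\<Sum>x\<in>UNIV. \<Sum>y\<in>UNIV. f x * g y * (p y * K y x))"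
    using assms unfolding reversible_def by simp
  also have "\<dots> = (\<Sum>y\<in>UNIV. \<Sum>x\<in>UNIV. f x * g y * (p y * K y x))"
    by (rule sum.swap)
  also have "\<dots> = inner_pi p (kapply K f) g"
    unfolding inner_pi_def kapply_def
    by (simp add: sum_distrib_left sum_distrib_right algebra_simps)
  finally show ?thesis .
qed

lemma inner_pi_funpow_kapply_reversible:
  assumes "reversible p K"
  shows "inner_pi p f ((kapply K ^^ n) g) = inner_pi p ((kapply K ^^ n) f) g"
proof (induction n arbitrary: f)
  case (Suc n)
  have "inner_pi p f ((kapply K ^^ Suc n) g) = inner_pi p (kapply K f) ((kapply K ^^ n) g)"
    by (simp add: inner_pi_kapply_reversible[OF assms])
  also have "\<dots> = inner_pi p ((kapply K ^^ Suc n) f) g"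
    by (simp add: Suc funpow_swap1)
  finally show ?case .
qed simp

lemma inner_pi_sandwich_reversible:
  assumes "reversible p Q"
  shows "inner_pi p f (kapply (kmult Q (kmult K Q)) f) = inner_pi p (kapply Q f) (kapply K (kapply Q f))"
  by (simp add: kapply_kmult inner_pi_kapply_reversible[OF assms])

lemma l2_0_iff_inner_pi_const: "f \<in> l2_0 p \<longleftrightarrow> inner_pi p (\<lambda>_. 1) f = 0"
  unfolding l2_0_def inner_pi_def by simp

lemma l2_0_add: "f \<in> l2_0 p \<Longrightarrow> g \<in> l2_0 p \<Longrightarrow> (\<lambda>x. f x + g x) \<in> l2_0 p"
  and l2_0_diff: "f \<in> l2_0 p \<Longrightarrow> g \<in> l2_0 p \<Longrightarrow> (\<lambda>x. f x - g x) \<in> l2_0 p"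
  and l2_0_cmult: "f \<in> l2_0 p \<Longrightarrow> (\<lambda>x. c * f x) \<in> l2_0 p"
  by (simp_all add: l2_0_iff_inner_pi_const inner_pi_add_right inner_pi_diff_right inner_pi_cmult_right)

lemma kapply_l2_0:
  assumes "reversible p K" "\<And>x. (\<Sum>y\<in>UNIV. K x y) = 1" "f \<in> l2_0 p"
  shows "kapply K f \<in> l2_0 p"
  using assms by (simp add: l2_0_iff_inner_pi_const inner_pi_kapply_reversible kapply_const)

definition norm_pi :: "('x::finite \<Rightarrow> real) \<Rightarrow> ('x \<Rightarrow> real) \<Rightarrow> real" where
  "norm_pi p f = sqrt (inner_pi p f f)"

locale positive_weight =
  fixes p :: "'x::finite \<Rightarrow> real"
  assumes weight_pos: "\<And>x. 0 < p x"
begin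

lemma inner_pi_self_nonneg: "0 \<le> inner_pi p f f"
  unfolding inner_pi_def using weight_pos by (intro sum_nonneg) (simp add: less_imp_le)

lemma inner_pi_self_pos:
  assumes "f \<noteq> (\<lambda>_. 0)"
  shows "0 < inner_pi p f f"
proof -
  obtain z where "f z \<noteq> 0" using assms by auto
  then have "0 < f z * f z * p z"
    using weight_pos[of z] by (metis mult_pos_pos not_real_square_gt_zero)
  also have "\<dots> \<le> inner_pi p f f"
    unfolding inner_pi_def using weight_pos by (intro member_le_sum) (simp_all add: less_imp_le)
  finally show ?thesis .
qed

lemma inner_pi_eqI:
  assumes "\<And>h. inner_pi p h u = inner_pi p h v"
  shows "u = v"
proof (rule ccontr)
  assume "u \<noteq> v"
  then have "0 < inner_pi p (\<lambda>x. u x - v x) (\<lambda>x. u x - v x)"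
    by (intro inner_pi_self_pos) (auto simp: fun_eq_iff)
  with assms[of "\<lambda>x. u x - v x"] show False by (simp add: inner_pi_diff_right)
qed

lemma norm_pi_nonneg: "0 \<le> norm_pi p f"
  unfolding norm_pi_def using inner_pi_self_nonneg by simp

lemma norm_pi_pos: "f \<noteq> (\<lambda>_. 0) \<Longrightarrow> 0 < norm_pi p f"
  unfolding norm_pi_def using inner_pi_self_pos by simp

lemma norm_pi_power2: "(norm_pi p f)\<^sup>2 = inner_pi p f f"
  unfolding norm_pi_def using inner_pi_self_nonneg by simp

lemma abs_inner_pi_le: "\<bar>inner_pi p f g\<bar> \<le> (inner_pi p f f + inner_pi p g g) / 2"
proof -
  have "\<bar>inner_pi p f g\<bar> \<le> (\<Sum>x\<in>UNIV. \<bar>f x * g x * p x\<bar>)"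
    unfolding inner_pi_def by (rule sum_abs)
  also have "\<dots> \<le> (\<Sum>x\<in>UNIV. (f x * f x * p x + g x * g x * p x) / 2)"
  proof (rule sum_mono)
    fix x
    have "2 * \<bar>f x * g x\<bar> \<le> f x * f x + g x * g x"
      using sum_squares_bound[of "\<bar>f x\<bar>" "\<bar>g x\<bar>"] by (simp add: abs_mult power2_eq_square mult.assoc)
    then show "\<bar>f x * g x * p x\<bar> \<le> (f x * f x * p x + g x * g x * p x) / 2"
      using weight_pos[of x] by (simp add: abs_mult distrib_right[symmetric] less_imp_le)
  qed
  also have "\<dots> = (inner_pi p f f + inner_pi p g g) / 2"
    unfolding inner_pi_def by (simp add: sum.distrib flip: sum_divide_distrib)
  finally show ?thesis .
qed

lemma abs_le_sqrt_inner_pi: "\<bar>f y\<bar> \<le> sqrt (inner_pi p f f / Min (range p))"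
proof (rule real_le_rsqrt)
  have m: "0 < Min (range p)" using weight_pos by simp
  have "f y * f y * Min (range p) \<le> f y * f y * p y"
    by (intro mult_left_mono) simp_all
  also have "\<dots> \<le> inner_pi p f f"
    unfolding inner_pi_def using weight_pos by (intro member_le_sum) (simp_all add: less_imp_le)
  finally show "\<bar>f y\<bar>\<^sup>2 \<le> inner_pi p f f / Min (range p)"
    using m by (simp add: pos_le_divide_eq power2_eq_square)
qed

lemma inner_pi_kapply_bounded: "\<exists>C. \<forall>f. inner_pi p (kapply K f) (kapply K f) \<le> C * inner_pi p f f"
proof -
  define m where "m = Min (range p)"
  define R where "R = (\<Sum>x\<in>UNIV. \<Sum>y\<in>UNIV. \<bar>K x y\<bar>)"
  have "inner_pi p (kapply K f) (kapply K f) \<le> (R\<^sup>2 * sum p UNIV / m) * inner_pi p f f" for f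
  proof -
    define s where "s = sqrt (inner_pi p f f / m)"
    have s: "0 \<le> s" "s\<^sup>2 = inner_pi p f f / m"
      using inner_pi_self_nonneg weight_pos by (simp_all add: s_def m_def less_imp_le)
    have "\<bar>kapply K f x\<bar> \<le> R * s" for x
    proof -
      have "\<bar>kapply K f x\<bar> \<le> (\<Sum>y\<in>UNIV. \<bar>K x y\<bar>) * s"
        by (rule abs_kapply_le) (simp add: s_def m_def abs_le_sqrt_inner_pi)
      also have "\<dots> \<le> R * s"
        unfolding R_def by (intro mult_right_mono member_le_sum s) (simp_all add: sum_nonneg)
      finally show ?thesis .
    qed
    then have "(kapply K f x)\<^sup>2 \<le> (R * s)\<^sup>2" for x
      using power_mono[of "\<bar>kapply K f x\<bar>" "R * s" 2] by simp
    then have "kapply K f x * kapply K f x * p x \<le> (R * s)\<^sup>2 * p x" for x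
      using weight_pos[of x] by (intro mult_right_mono) (simp_all add: power2_eq_square less_imp_le)
    then have "inner_pi p (kapply K f) (kapply K f) \<le> (\<Sum>x\<in>UNIV. (R * s)\<^sup>2 * p x)"
      unfolding inner_pi_def by (rule sum_mono)
    also have "\<dots> = (R * s)\<^sup>2 * sum p UNIV"
      by (simp add: sum_distrib_left)
    also have "\<dots> = (R\<^sup>2 * sum p UNIV / m) * inner_pi p f f"
      by (simp add: power_mult_distrib s(2))
    finally show ?thesis .
  qed
  then show ?thesis by blast
qed

text \<open>\<open>rho\<close> and \<open>opnorm_l2_0\<close> are suprema of real sets, which say nothing unless the
sets are bounded above.\<close>

lemma bdd_above_l2_0_quotients:
  assumes "\<And>f. f \<noteq> (\<lambda>_. 0) \<Longrightarrow> q f \<le> C"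
  shows "bdd_above {q f | f. f \<in> l2_0 p \<and> f \<noteq> (\<lambda>_. 0)}"
  using assms by (intro bdd_aboveI[where M = C]) blast

lemma bdd_above_rho_quotients:
  "bdd_above {\<bar>inner_pi p f (kapply K f)\<bar> / inner_pi p f f | f. f \<in> l2_0 p \<and> f \<noteq> (\<lambda>_. 0)}"
proof -
  obtain C where C: "\<And>f. inner_pi p (kapply K f) (kapply K f) \<le> C * inner_pi p f f"
    using inner_pi_kapply_bounded by blast
  show ?thesis
  proof (rule bdd_above_l2_0_quotients)
    fix f :: "'x \<Rightarrow> real" assume "f \<noteq> (\<lambda>_. 0)"
    then have pos: "0 < inner_pi p f f" by (rule inner_pi_self_pos)
    have "\<bar>inner_pi p f (kapply K f)\<bar> \<le> (1 + C) / 2 * inner_pi p f f"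
      using abs_inner_pi_le[of f "kapply K f"] C[of f] by (simp add: algebra_simps)
    then show "\<bar>inner_pi p f (kapply K f)\<bar> / inner_pi p f f \<le> (1 + C) / 2"
      using pos by (simp add: pos_divide_le_eq)
  qed
qed

lemma bdd_above_opnorm_quotients:
  "bdd_above {norm_pi p (kapply K f) / norm_pi p f | f. f \<in> l2_0 p \<and> f \<noteq> (\<lambda>_. 0)}"
proof -
  obtain C where C: "\<And>f. inner_pi p (kapply K f) (kapply K f) \<le> C * inner_pi p f f"
    using inner_pi_kapply_bounded by blast
  show ?thesis
  proof (rule bdd_above_l2_0_quotients)
    fix f :: "'x \<Rightarrow> real" assume "f \<noteq> (\<lambda>_. 0)"
    then have pos: "0 < norm_pi p f" by (rule norm_pi_pos)
    have "norm_pi p (kapply K f) \<le> sqrt (C * inner_pi p f f)"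
      unfolding norm_pi_def using C by (rule real_sqrt_le_mono)
    then show "norm_pi p (kapply K f) / norm_pi p f \<le> sqrt C"
      using pos by (simp add: pos_divide_le_eq real_sqrt_mult norm_pi_def)
  qed
qed

lemma opnorm_l2_0_eq:
  "opnorm_l2_0 p K
     = Sup (insert 0 {norm_pi p (kapply K f) / norm_pi p f | f. f \<in> l2_0 p \<and> f \<noteq> (\<lambda>_. 0)})"
  unfolding opnorm_l2_0_def norm_pi_def ..

lemma rho_nonneg: "0 \<le> rho p K"
  unfolding rho_def using bdd_above_rho_quotients by (intro cSup_upper) auto

lemma opnorm_l2_0_nonneg: "0 \<le> opnorm_l2_0 p K"
  unfolding opnorm_l2_0_eq using bdd_above_opnorm_quotients by (intro cSup_upper) auto

lemma abs_inner_pi_kapply_le_rho: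
  assumes "f \<in> l2_0 p"
  shows "\<bar>inner_pi p f (kapply K f)\<bar> \<le> rho p K * (norm_pi p f)\<^sup>2"
proof (cases "f = (\<lambda>_. 0)")
  case False
  have "\<bar>inner_pi p f (kapply K f)\<bar> / inner_pi p f f \<le> rho p K"
    unfolding rho_def using bdd_above_rho_quotients assms False by (intro cSup_upper) auto
  then show ?thesis
    using inner_pi_self_pos[OF False] by (simp add: norm_pi_power2 pos_divide_le_eq)
qed (simp add: inner_pi_zero_left rho_nonneg)

lemma rho_le:
  assumes "\<And>f. f \<in> l2_0 p \<Longrightarrow> \<bar>inner_pi p f (kapply K f)\<bar> \<le> c * (norm_pi p f)\<^sup>2"
    and "0 \<le> c"
  shows "rho p K \<le> c"
  unfolding rho_def
proof (rule cSup_least)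
  fix r
  assume "r \<in> insert 0 {\<bar>inner_pi p f (kapply K f)\<bar> / inner_pi p f f
                         | f. f \<in> l2_0 p \<and> f \<noteq> (\<lambda>_. 0)}"
  then consider "r = 0"
    | f where "r = \<bar>inner_pi p f (kapply K f)\<bar> / inner_pi p f f" "f \<in> l2_0 p" "f \<noteq> (\<lambda>_. 0)"
    by blast
  then show "r \<le> c"
  proof cases
    case 2
    then show ?thesis
      using assms(1)[of f] inner_pi_self_pos[of f] by (simp add: norm_pi_power2 pos_divide_le_eq)
  qed (use assms(2) in simp)
qed simp

lemma norm_pi_kapply_le_opnorm:
  assumes "f \<in> l2_0 p"
  shows "norm_pi p (kapply K f) \<le> opnorm_l2_0 p K * norm_pi p f"
proof (cases "f = (\<lambda>_. 0)")
  case False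
  have "norm_pi p (kapply K f) / norm_pi p f \<le> opnorm_l2_0 p K"
    unfolding opnorm_l2_0_eq using bdd_above_opnorm_quotients assms False by (intro cSup_upper) auto
  then show ?thesis
    using norm_pi_pos[OF False] by (simp add: pos_divide_le_eq)
qed (simp add: kapply_zero norm_pi_def inner_pi_zero_left)

lemma norm_pi_funpow_kapply_le:
  assumes invariant: "\<And>h. h \<in> l2_0 p \<Longrightarrow> kapply K h \<in> l2_0 p" and f: "f \<in> l2_0 p"
  shows "norm_pi p ((kapply K ^^ n) f) \<le> opnorm_l2_0 p K ^ n * norm_pi p f"
proof (induction n)
  case (Suc n)
  have "(kapply K ^^ m) f \<in> l2_0 p" for m
    by (induction m) (simp_all add: invariant f)
  then have "norm_pi p ((kapply K ^^ Suc n) f) \<le> opnorm_l2_0 p K * norm_pi p ((kapply K ^^ n) f)"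
    by (simp add: norm_pi_kapply_le_opnorm)
  also have "\<dots> \<le> opnorm_l2_0 p K * (opnorm_l2_0 p K ^ n * norm_pi p f)"
    by (intro mult_left_mono Suc opnorm_l2_0_nonneg)
  finally show ?case by (simp add: mult.assoc)
qed simp

text \<open>Polarization gives the bound \<open>\<rho>(K) (\<parallel>u\<parallel>^2 + \<parallel>v\<parallel>^2) / 2\<close>; rescaling \<open>a\<close> and \<open>b\<close>
to equal norms turns it into the product bound.\<close>

lemma abs_inner_pi_kapply_le_rho_norm:
  assumes K: "reversible p K" and a: "a \<in> l2_0 p" and b: "b \<in> l2_0 p"
  shows "\<bar>inner_pi p a (kapply K b)\<bar> \<le> rho p K * norm_pi p a * norm_pi p b"
proof -
  have polarization: "\<bar>inner_pi p u (kapply K v)\<bar> \<le> rho p K * ((norm_pi p u)\<^sup>2 + (norm_pi p v)\<^sup>2) / 2"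
    if u: "u \<in> l2_0 p" and v: "v \<in> l2_0 p" for u v
  proof -
    let ?s = "\<lambda>x. u x + v x" and ?d = "\<lambda>x. u x - v x"
    have sym: "inner_pi p v (kapply K u) = inner_pi p u (kapply K v)"
      using inner_pi_kapply_reversible[OF K, of v u] inner_pi_commute by metis
    have "4 * inner_pi p u (kapply K v) = inner_pi p ?s (kapply K ?s) - inner_pi p ?d (kapply K ?d)"
      by (simp add: kapply_add kapply_diff inner_pi_add_left inner_pi_add_right
          inner_pi_diff_left inner_pi_diff_right sym)
    moreover have "\<bar>inner_pi p ?s (kapply K ?s)\<bar> \<le> rho p K * (norm_pi p ?s)\<^sup>2"
      using u v by (intro abs_inner_pi_kapply_le_rho l2_0_add)
    moreover have "\<bar>inner_pi p ?d (kapply K ?d)\<bar> \<le> rho p K * (norm_pi p ?d)\<^sup>2"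
      using u v by (intro abs_inner_pi_kapply_le_rho l2_0_diff)
    ultimately have "4 * \<bar>inner_pi p u (kapply K v)\<bar> \<le> rho p K * ((norm_pi p ?s)\<^sup>2 + (norm_pi p ?d)\<^sup>2)"
      unfolding distrib_left by linarith
    also have "(norm_pi p ?s)\<^sup>2 + (norm_pi p ?d)\<^sup>2 = 2 * ((norm_pi p u)\<^sup>2 + (norm_pi p v)\<^sup>2)"
      by (simp add: norm_pi_power2 inner_pi_add_left inner_pi_add_right inner_pi_diff_left
          inner_pi_diff_right inner_pi_commute[of p v u])
    finally show ?thesis by (simp add: algebra_simps)
  qed
  show ?thesis
  proof (cases "a = (\<lambda>_. 0) \<or> b = (\<lambda>_. 0)")
    case True
    then show ?thesis
      by (auto simp: kapply_zero inner_pi_zero_left inner_pi_zero_right norm_pi_def)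
  next
    case False
    then have na: "0 < norm_pi p a" and nb: "0 < norm_pi p b"
      by (auto intro: norm_pi_pos)
    define t where "t = sqrt (norm_pi p b / norm_pi p a)"
    have t: "0 < t" "t\<^sup>2 = norm_pi p b / norm_pi p a"
      using na nb by (simp_all add: t_def)
    have "inner_pi p a (kapply K b) = inner_pi p (\<lambda>x. t * a x) (kapply K (\<lambda>x. inverse t * b x))"
      using t by (simp add: kapply_cmult inner_pi_cmult_left inner_pi_cmult_right)
    also have "\<bar>\<dots>\<bar> \<le> rho p K * ((norm_pi p (\<lambda>x. t * a x))\<^sup>2
                                + (norm_pi p (\<lambda>x. inverse t * b x))\<^sup>2) / 2"
      using a b by (intro polarization l2_0_cmult)
    also have "(norm_pi p (\<lambda>x. t * a x))\<^sup>2 = t\<^sup>2 * (norm_pi p a)\<^sup>2"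
      unfolding norm_pi_power2 inner_pi_cmult_left inner_pi_cmult_right by (simp add: power2_eq_square)
    also have "(norm_pi p (\<lambda>x. inverse t * b x))\<^sup>2 = (norm_pi p b)\<^sup>2 / t\<^sup>2"
      unfolding norm_pi_power2 inner_pi_cmult_left inner_pi_cmult_right
      using t(1) by (simp add: power2_eq_square field_simps)
    also have "t\<^sup>2 * (norm_pi p a)\<^sup>2 + (norm_pi p b)\<^sup>2 / t\<^sup>2 = 2 * (norm_pi p a * norm_pi p b)"
      using na nb unfolding t(2) by (simp add: field_simps power2_eq_square)
    finally show ?thesis by (simp add: mult.assoc)
  qed
qed

lemma rho_sandwich_le:
  assumes Q: "reversible p Q" "\<And>x. (\<Sum>y\<in>UNIV. Q x y) = 1"
    and contraction: "\<And>f. norm_pi p (kapply Q f) \<le> norm_pi p f"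
  shows "rho p (kmult Q (kmult K Q)) \<le> rho p K"
proof (rule rho_le[OF _ rho_nonneg])
  fix f assume f: "f \<in> l2_0 p"
  have "\<bar>inner_pi p f (kapply (kmult Q (kmult K Q)) f)\<bar> = \<bar>inner_pi p (kapply Q f) (kapply K (kapply Q f))\<bar>"
    by (simp only: inner_pi_sandwich_reversible[OF Q(1)])
  also have "\<dots> \<le> rho p K * (norm_pi p (kapply Q f))\<^sup>2"
    by (rule abs_inner_pi_kapply_le_rho[OF kapply_l2_0[OF Q f]])
  also have "\<dots> \<le> rho p K * (norm_pi p f)\<^sup>2"
    by (intro mult_left_mono power_mono contraction rho_nonneg norm_pi_nonneg)
  finally show "\<bar>inner_pi p f (kapply (kmult Q (kmult K Q)) f)\<bar> \<le> rho p K * (norm_pi p f)\<^sup>2" .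
qed

end


locale orbit_kernels = positive_weight p for p :: "'x::finite \<Rightarrow> real" +
  fixes \<Gamma> :: "('g, 'm) monoid_scheme" and \<phi> :: "'g \<Rightarrow> 'x \<Rightarrow> 'x"
  assumes action: "group_action \<Gamma> UNIV \<phi>"
begin

abbreviation "G \<equiv> gibbs_orbit \<Gamma> \<phi> p"
abbreviation "M \<equiv> mh_orbit \<Gamma> \<phi> p"

lemma in_own_orbit: "x \<in> orbit \<Gamma> \<phi> x"
  using group_action.orbit_refl[OF action] by simp

lemma orbit_sym: "y \<in> orbit \<Gamma> \<phi> x \<Longrightarrow> x \<in> orbit \<Gamma> \<phi> y"
  using group_action.orbit_sym[OF action] by simp

lemma orbit_eq:
  assumes "y \<in> orbit \<Gamma> \<phi> x"
  shows "orbit \<Gamma> \<phi> y = orbit \<Gamma> \<phi> x"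
proof -
  have "orbit \<Gamma> \<phi> v \<subseteq> orbit \<Gamma> \<phi> u" if "v \<in> orbit \<Gamma> \<phi> u" for u v
    using group_action.orbit_trans[OF action, of u v] that by auto
  then show ?thesis using assms orbit_sym by blast
qed

lemma gibbs_orbit_row_sum: "(\<Sum>y\<in>UNIV. G x y) = 1"
proof -
  have "0 < (\<Sum>z\<in>orbit \<Gamma> \<phi> x. p z)"
    using in_own_orbit weight_pos by (intro sum_pos2[where i = x]) (auto simp: less_imp_le)
  then show ?thesis
    unfolding gibbs_orbit_def by (simp add: sum.If_cases flip: sum_divide_distrib)
qed

lemma gibbs_orbit_reversible: "reversible p G"
  unfolding reversible_def
proof (intro allI)
  fix x y
  show "p x * G x y = p y * G y x"
  proof (cases "y \<in> orbit \<Gamma> \<phi> x")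
    case True
    with orbit_sym[OF True] orbit_eq[OF True] show ?thesis by (simp add: gibbs_orbit_def)
  next
    case False
    then have "x \<notin> orbit \<Gamma> \<phi> y" using orbit_sym[of x y] by blast
    with False show ?thesis by (simp add: gibbs_orbit_def)
  qed
qed

lemma gibbs_orbit_outside_orbit: "y \<notin> orbit \<Gamma> \<phi> x \<Longrightarrow> G x y = 0"
  unfolding gibbs_orbit_def by simp

lemma kapply_gibbs_orbit_orbit_invariant:
  assumes "y \<in> orbit \<Gamma> \<phi> x"
  shows "kapply G f y = kapply G f x"
  unfolding kapply_def gibbs_orbit_def orbit_eq[OF assms] ..

lemma mh_orbit_row_sum: "(\<Sum>y\<in>UNIV. M x y) = 1"
proof -
  have "(\<Sum>y\<in>UNIV. M x y) = M x x + (\<Sum>y\<in>UNIV - {x}. M x y)"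
    by (rule sum.remove) simp_all
  also have "(\<Sum>y\<in>UNIV - {x}. M x y) = (\<Sum>y\<in>UNIV - {x}. mh_offdiag \<Gamma> \<phi> p x y)"
    unfolding mh_orbit_def by (rule sum.cong) auto
  finally show ?thesis unfolding mh_orbit_def by simp
qed

lemma mh_orbit_reversible: "reversible p M"
  unfolding reversible_def
proof (intro allI)
  fix x y
  have min_weight: "p u * min 1 (p v / p u) = min (p u) (p v)" for u v
    using weight_pos[of u] by (simp add: min_def field_simps)
  show "p x * M x y = p y * M y x"
  proof (cases "x \<noteq> y \<and> y \<in> orbit \<Gamma> \<phi> x")
    case True
    then have "x \<noteq> y" "y \<in> orbit \<Gamma> \<phi> x" "x \<in> orbit \<Gamma> \<phi> y"
      "orbit \<Gamma> \<phi> y = orbit \<Gamma> \<phi> x"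
      using orbit_eq[of y x] orbit_sym[of y x] by auto
    then show ?thesis
      by (simp add: mh_orbit_def mh_offdiag_def min_weight min.commute)
  next
    case False
    then show ?thesis
      using orbit_sym[of x y] by (auto simp: mh_orbit_def mh_offdiag_def)
  qed
qed

lemma mh_orbit_outside_orbit: "y \<notin> orbit \<Gamma> \<phi> x \<Longrightarrow> M x y = 0"
  unfolding mh_orbit_def mh_offdiag_def using in_own_orbit by auto

lemma kapply_gibbs_orbit_l2_0: "f \<in> l2_0 p \<Longrightarrow> kapply G f \<in> l2_0 p"
  and kapply_mh_orbit_l2_0: "f \<in> l2_0 p \<Longrightarrow> kapply M f \<in> l2_0 p"
  by (simp_all add: kapply_l2_0 gibbs_orbit_reversible gibbs_orbit_row_sum
      mh_orbit_reversible mh_orbit_row_sum)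

lemma kapply_orbit_supported_gibbs_orbit:
  assumes support: "\<And>x y. y \<notin> orbit \<Gamma> \<phi> x \<Longrightarrow> K x y = 0"
    and row_sum: "\<And>x. (\<Sum>y\<in>UNIV. K x y) = 1"
  shows "kapply K (kapply G f) = kapply G f"
proof
  fix x
  show "kapply K (kapply G f) x = kapply G f x"
  proof (rule kapply_eq_const_on_support[OF _ row_sum])
    fix y assume "K x y \<noteq> 0"
    with support have "y \<in> orbit \<Gamma> \<phi> x" by blast
    then show "kapply G f y = kapply G f x" by (rule kapply_gibbs_orbit_orbit_invariant)
  qed
qed

lemma kapply_mh_orbit_gibbs_orbit: "kapply M (kapply G f) = kapply G f"
  by (intro kapply_orbit_supported_gibbs_orbit mh_orbit_outside_orbit mh_orbit_row_sum)

lemma kapply_gibbs_orbit_idem: "kapply G (kapply G f) = kapply G f"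
  by (intro kapply_orbit_supported_gibbs_orbit gibbs_orbit_outside_orbit gibbs_orbit_row_sum)

text \<open>By self-adjointness, \<open>GM = (MG)^* = G^* = G\<close>.\<close>

lemma kapply_gibbs_orbit_mh_orbit: "kapply G (kapply M f) = kapply G f"
proof (rule inner_pi_eqI)
  fix h
  have "inner_pi p h (kapply G (kapply M f)) = inner_pi p (kapply M (kapply G h)) f"
    unfolding inner_pi_kapply_reversible[OF gibbs_orbit_reversible]
      inner_pi_kapply_reversible[OF mh_orbit_reversible] ..
  also have "\<dots> = inner_pi p h (kapply G f)"
    unfolding kapply_mh_orbit_gibbs_orbit inner_pi_kapply_reversible[OF gibbs_orbit_reversible] ..
  finally show "inner_pi p h (kapply G (kapply M f)) = inner_pi p h (kapply G f)" .
qed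

lemma funpow_mh_orbit_gibbs_orbit: "(kapply M ^^ k) (kapply G f) = kapply G f"
  by (induction k) (simp_all add: kapply_mh_orbit_gibbs_orbit)

lemma gibbs_orbit_funpow_mh_orbit: "kapply G ((kapply M ^^ k) f) = kapply G f"
  by (induction k) (simp_all add: kapply_gibbs_orbit_mh_orbit)

lemma norm_pi_gibbs_orbit_pythagoras:
  "(norm_pi p f)\<^sup>2 = (norm_pi p (kapply G f))\<^sup>2 + (norm_pi p (\<lambda>x. f x - kapply G f x))\<^sup>2"
proof -
  have "inner_pi p (kapply G f) (kapply G f) = inner_pi p f (kapply G f)"
    using inner_pi_kapply_reversible[OF gibbs_orbit_reversible, of f "kapply G f"]
    by (simp add: kapply_gibbs_orbit_idem)
  then show ?thesis
    by (simp add: norm_pi_power2 inner_pi_diff_left inner_pi_diff_right inner_pi_commute[of p "kapply G f" f])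
qed

lemma norm_pi_gibbs_orbit_le: "norm_pi p (kapply G f) \<le> norm_pi p f"
  and norm_pi_sub_gibbs_orbit_le: "norm_pi p (\<lambda>x. f x - kapply G f x) \<le> norm_pi p f"
  by (rule power2_le_imp_le[OF _ norm_pi_nonneg], simp add: norm_pi_gibbs_orbit_pythagoras[of f])+

lemma funpow_mh_orbit_sub_gibbs_orbit:
  "(\<lambda>x. (kapply M ^^ k) f x - kapply G f x)
     = (kapply (\<lambda>x y. M x y - G x y) ^^ k) (\<lambda>x. f x - kapply G f x)"
proof (induction k)
  case (Suc k)
  have "(\<lambda>x. (kapply M ^^ Suc k) f x - kapply G f x)
      = kapply (\<lambda>x y. M x y - G x y) (\<lambda>x. (kapply M ^^ k) f x - kapply G f x)"
    by (simp add: kapply_kernel_diff kapply_diff kapply_mh_orbit_gibbs_orbit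
        gibbs_orbit_funpow_mh_orbit kapply_gibbs_orbit_idem)
  also have "\<dots> = (kapply (\<lambda>x y. M x y - G x y) ^^ Suc k) (\<lambda>x. f x - kapply G f x)"
    unfolding Suc.IH by simp
  finally show ?case .
qed simp

lemma norm_pi_funpow_mh_orbit_sub_gibbs_orbit_le:
  assumes "f \<in> l2_0 p"
  shows "norm_pi p (\<lambda>x. (kapply M ^^ k) f x - kapply G f x)
    \<le> opnorm_l2_0 p (\<lambda>x y. M x y - G x y) ^ k * norm_pi p f"
proof -
  have "norm_pi p (\<lambda>x. (kapply M ^^ k) f x - kapply G f x)
      \<le> opnorm_l2_0 p (\<lambda>x y. M x y - G x y) ^ k * norm_pi p (\<lambda>x. f x - kapply G f x)"
    unfolding funpow_mh_orbit_sub_gibbs_orbit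
    using assms by (intro norm_pi_funpow_kapply_le)
      (simp_all add: kapply_kernel_diff l2_0_diff kapply_gibbs_orbit_l2_0 kapply_mh_orbit_l2_0)
  also have "\<dots> \<le> opnorm_l2_0 p (\<lambda>x y. M x y - G x y) ^ k * norm_pi p f"
    by (intro mult_left_mono norm_pi_sub_gibbs_orbit_le zero_le_power opnorm_l2_0_nonneg)
  finally show ?thesis .
qed

text \<open>\<open>GPG = G (M^k P M^k) G\<close>, and \<open>G\<close> is a self-adjoint contraction.\<close>

lemma rho_gibbs_orbit_sandwich_le:
  "rho p (kmult G (kmult P G)) \<le> rho p (kmult (kpow M k) (kmult P (kpow M k)))"
proof -
  have "kapply (kmult G (kmult P G)) = kapply (kmult G (kmult (kmult (kpow M k) (kmult P (kpow M k))) G))"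
    by (simp add: fun_eq_iff kapply_kmult kapply_kpow funpow_mh_orbit_gibbs_orbit gibbs_orbit_funpow_mh_orbit)
  then have "rho p (kmult G (kmult P G)) = rho p (kmult G (kmult (kmult (kpow M k) (kmult P (kpow M k))) G))"
    unfolding rho_def by simp
  also have "\<dots> \<le> rho p (kmult (kpow M k) (kmult P (kpow M k)))"
    by (intro rho_sandwich_le gibbs_orbit_reversible gibbs_orbit_row_sum norm_pi_gibbs_orbit_le)
  finally show ?thesis .
qed


lemma rho_mh_orbit_sandwich_le:
  assumes P: "reversible p P"
  shows "rho p (kmult (kpow M k) (kmult P (kpow M k)))
    \<le> rho p (kmult G (kmult P G))
       + rho p P * (2 * opnorm_l2_0 p (\<lambda>x y. M x y - G x y) ^ k
                    + opnorm_l2_0 p (\<lambda>x y. M x y - G x y) ^ (2 * k))"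
    (is "_ \<le> ?\<rho>G + ?\<rho>P * (2 * ?\<theta> ^ k + ?\<theta> ^ (2 * k))")
proof (rule rho_le)
  show "0 \<le> ?\<rho>G + ?\<rho>P * (2 * ?\<theta> ^ k + ?\<theta> ^ (2 * k))"
    by (intro add_nonneg_nonneg mult_nonneg_nonneg rho_nonneg zero_le_power opnorm_l2_0_nonneg) simp
  fix f assume f: "f \<in> l2_0 p"
  define a where "a = kapply G f"
  define b where "b = (\<lambda>x. (kapply M ^^ k) f x - kapply G f x)"
  have "(kapply M ^^ n) f \<in> l2_0 p" for n
    using f by (induction n) (simp_all add: kapply_mh_orbit_l2_0)
  then have a: "a \<in> l2_0 p" "norm_pi p a \<le> norm_pi p f"
    and b: "b \<in> l2_0 p" "norm_pi p b \<le> ?\<theta> ^ k * norm_pi p f"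
    using f by (simp_all add: a_def b_def kapply_gibbs_orbit_l2_0 l2_0_diff norm_pi_gibbs_orbit_le
        norm_pi_funpow_mh_orbit_sub_gibbs_orbit_le)
  have sym: "inner_pi p b (kapply P a) = inner_pi p a (kapply P b)"
    using inner_pi_kapply_reversible[OF P, of b a] inner_pi_commute by metis
  have "inner_pi p f (kapply (kmult (kpow M k) (kmult P (kpow M k))) f)
      = inner_pi p ((kapply M ^^ k) f) (kapply P ((kapply M ^^ k) f))"
    by (simp add: kapply_kmult kapply_kpow inner_pi_funpow_kapply_reversible[OF mh_orbit_reversible])
  also have "(kapply M ^^ k) f = (\<lambda>x. a x + b x)"
    by (simp add: a_def b_def)
  also have "inner_pi p (\<lambda>x. a x + b x) (kapply P (\<lambda>x. a x + b x))
      = inner_pi p a (kapply P a) + 2 * inner_pi p a (kapply P b) + inner_pi p b (kapply P b)"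
    by (simp add: kapply_add inner_pi_add_left inner_pi_add_right sym)
  finally have expand: "inner_pi p f (kapply (kmult (kpow M k) (kmult P (kpow M k))) f)
      = inner_pi p a (kapply P a) + 2 * inner_pi p a (kapply P b) + inner_pi p b (kapply P b)" .
  have "inner_pi p a (kapply P a) = inner_pi p f (kapply (kmult G (kmult P G)) f)"
    by (simp add: a_def inner_pi_sandwich_reversible[OF gibbs_orbit_reversible])
  then have aa: "\<bar>inner_pi p a (kapply P a)\<bar> \<le> ?\<rho>G * (norm_pi p f)\<^sup>2"
    using abs_inner_pi_kapply_le_rho[OF f] by simp
  have "\<bar>inner_pi p a (kapply P b)\<bar> \<le> ?\<rho>P * norm_pi p a * norm_pi p b"
    by (rule abs_inner_pi_kapply_le_rho_norm[OF P a(1) b(1)])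
  also have "\<dots> \<le> ?\<rho>P * norm_pi p f * (?\<theta> ^ k * norm_pi p f)"
    by (intro mult_mono mult_left_mono a(2) b(2) rho_nonneg norm_pi_nonneg mult_nonneg_nonneg)
      simp_all
  finally have ab: "\<bar>inner_pi p a (kapply P b)\<bar> \<le> ?\<rho>P * (?\<theta> ^ k * (norm_pi p f)\<^sup>2)"
    by (simp add: power2_eq_square mult_ac)
  have "\<bar>inner_pi p b (kapply P b)\<bar> \<le> ?\<rho>P * (norm_pi p b)\<^sup>2"
    by (rule abs_inner_pi_kapply_le_rho[OF b(1)])
  also have "\<dots> \<le> ?\<rho>P * (?\<theta> ^ k * norm_pi p f)\<^sup>2"
    by (intro mult_left_mono power_mono b(2) norm_pi_nonneg rho_nonneg)
  finally have bb: "\<bar>inner_pi p b (kapply P b)\<bar> \<le> ?\<rho>P * (?\<theta> ^ (2 * k) * (norm_pi p f)\<^sup>2)"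
    by (simp add: power_mult_distrib power_mult mult.commute[of 2 k])
  have "(?\<rho>G + ?\<rho>P * (2 * ?\<theta> ^ k + ?\<theta> ^ (2 * k))) * (norm_pi p f)\<^sup>2
      = ?\<rho>G * (norm_pi p f)\<^sup>2 + 2 * (?\<rho>P * (?\<theta> ^ k * (norm_pi p f)\<^sup>2))
        + ?\<rho>P * (?\<theta> ^ (2 * k) * (norm_pi p f)\<^sup>2)"
    by (simp add: algebra_simps)
  with expand aa ab bb
  show "\<bar>inner_pi p f (kapply (kmult (kpow M k) (kmult P (kpow M k))) f)\<bar>
      \<le> (?\<rho>G + ?\<rho>P * (2 * ?\<theta> ^ k + ?\<theta> ^ (2 * k))) * (norm_pi p f)\<^sup>2"
    by linarith
qed

end

theorem proposition3p7:
  fixes \<pi> :: "'x::finite \<Rightarrow> real" and P :: "'x \<Rightarrow> 'x \<Rightarrow> real"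
    and \<Gamma> :: "('g, 'm) monoid_scheme" and \<phi> :: "'g \<Rightarrow> 'x \<Rightarrow> 'x"
  assumes "pmf_full_support \<pi>"
    and "stochastic P" and "reversible \<pi> P" and "ergodic P"
    and "group_action \<Gamma> UNIV \<phi>"
  defines "G \<equiv> gibbs_orbit \<Gamma> \<phi> \<pi>"
    and "M \<equiv> mh_orbit \<Gamma> \<phi> \<pi>"
  defines "\<theta> \<equiv> opnorm_l2_0 \<pi> (\<lambda>x y. M x y - G x y)"
  shows "(\<forall>k::nat. k \<ge> 1 \<longrightarrow>
            0 \<le> rho \<pi> (kmult (kpow M k) (kmult P (kpow M k))) - rho \<pi> (kmult G (kmult P G)) \<and>
            rho \<pi> (kmult (kpow M k) (kmult P (kpow M k))) - rho \<pi> (kmult G (kmult P G))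
              \<le> rho \<pi> P * (2 * \<theta> ^ k + \<theta> ^ (2 * k)))
       \<and> (\<theta> < 1 \<longrightarrow>
            (\<lambda>k. rho \<pi> (kmult (kpow M k) (kmult P (kpow M k))) - rho \<pi> (kmult G (kmult P G)))
              \<longlonglongrightarrow> 0)"
proof -
  have kernels: "orbit_kernels \<pi> \<Gamma> \<phi>"
    using assms(1,5)
    by (simp add: orbit_kernels_def orbit_kernels_axioms_def positive_weight_def pmf_full_support_def)
  define d where "d = (\<lambda>k. rho \<pi> (kmult (kpow M k) (kmult P (kpow M k))) - rho \<pi> (kmult G (kmult P G)))"
  have lower: "0 \<le> d k" for k
    using orbit_kernels.rho_gibbs_orbit_sandwich_le[OF kernels, where P = P and k = k]
    by (simp add: d_def G_def M_def)
  have upper: "d k \<le> rho \<pi> P * (2 * \<theta> ^ k + \<theta> ^ (2 * k))" for k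
    using orbit_kernels.rho_mh_orbit_sandwich_le[OF kernels assms(3), where k = k]
    by (simp add: d_def \<theta>_def G_def M_def)
  have "d \<longlonglongrightarrow> 0" if "\<theta> < 1"
  proof (rule tendsto_sandwich[OF _ _ tendsto_const])
    have "0 \<le> \<theta>"
      unfolding \<theta>_def by (rule positive_weight.opnorm_l2_0_nonneg[OF orbit_kernels.axioms(1)[OF kernels]])
    then have power: "(\<lambda>k. \<theta> ^ k) \<longlonglongrightarrow> 0"
      using that by (rule LIMSEQ_realpow_zero)
    have "\<theta> ^ (2 * k) = \<theta> ^ k * \<theta> ^ k" for k
      by (metis mult_2 power_add)
    then show "(\<lambda>k. rho \<pi> P * (2 * \<theta> ^ k + \<theta> ^ (2 * k))) \<longlonglongrightarrow> 0"
      using tendsto_mult[OF tendsto_const tendsto_add[OF tendsto_mult[OF tendsto_const power]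
            tendsto_mult[OF power power]], of "rho \<pi> P" 2] by simp
  qed (simp_all add: lower upper)
  then show ?thesis
    using lower upper by (simp add: d_def)
qed

end
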